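(* Let $L_1$ be a finite-dimensional non-nilpotent Lie algebra over a field $F$. For every finite-dimensional nilpotent Lie algebra $L$ over $F$, the number of connected components of $\Gamma_{\mathfrak{N}}(L_1\oplus L)$ equals the number of connected components of $\Gamma_{\mathfrak{N}}(L_1)$. In particular, $\Gamma_{\mathfrak{N}}(L_1)$ is connected if and only if $\Gamma_{\mathfrak{N}}(L_1\oplus L)$ is connected for every finite-dimensional nilpotent Lie algebra $L$.
   Context: $\langle a,b\rangle$ denotes the Lie subalgebra generated by $a,b$, and $\mathrm{nil}(L)=\{x\in L\mid \langle h,x\rangle \text{ is nilpotent for all } h\in L\}$. For a finite-dimensional non-nilpotent Lie algebra $L$, the nilpotent graph $\Gamma_{\mathfrak{N}}(L)$ is the simple undirected graph with vertex set $L\setminus\mathrm{nil}(L)$ in which distinct vertices $x,y$ are adjacent iff $\langle x,y\rangle$ is nilpotent. $L_1\oplus L$ is the direct sum of Lie algebras with componentwise bracket. *)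

theory Defs
  imports Main "HOL.Vector_Spaces" "HOL-Library.Product_Plus"
begin

text \<open>A Lie algebra over a field 'k, carried by the whole type 'v, with scalar
multiplication sc and bracket br.\<close>

definition lie_algebra :: "('k::field \<Rightarrow> 'v::ab_group_add \<Rightarrow> 'v) \<Rightarrow> ('v \<Rightarrow> 'v \<Rightarrow> 'v) \<Rightarrow> bool" where
  "lie_algebra sc br \<longleftrightarrow> vector_space sc
     \<and> (\<forall>x y z. br (x + y) z = br x z + br y z)
     \<and> (\<forall>x y z. br x (y + z) = br x y + br x z)
     \<and> (\<forall>c x y. br (sc c x) y = sc c (br x y))
     \<and> (\<forall>c x y. br x (sc c y) = sc c (br x y))
     \<and> (\<forall>x. br x x = 0)
     \<and> (\<forall>x y z. br x (br y z) + br y (br z x) + br z (br x y) = 0)"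

definition fin_dim_lie_algebra :: "('k::field \<Rightarrow> 'v::ab_group_add \<Rightarrow> 'v) \<Rightarrow> ('v \<Rightarrow> 'v \<Rightarrow> 'v) \<Rightarrow> bool" where
  "fin_dim_lie_algebra sc br \<longleftrightarrow> lie_algebra sc br
     \<and> (\<exists>B. finite B \<and> module.span sc B = UNIV)"

definition lie_subalgebra :: "('k::field \<Rightarrow> 'v::ab_group_add \<Rightarrow> 'v) \<Rightarrow> ('v \<Rightarrow> 'v \<Rightarrow> 'v) \<Rightarrow> 'v set \<Rightarrow> bool" where
  "lie_subalgebra sc br S \<longleftrightarrow> module.subspace sc S \<and> (\<forall>x\<in>S. \<forall>y\<in>S. br x y \<in> S)"

definition gen2 :: "('k::field \<Rightarrow> 'v::ab_group_add \<Rightarrow> 'v) \<Rightarrow> ('v \<Rightarrow> 'v \<Rightarrow> 'v) \<Rightarrow> 'v \<Rightarrow> 'v \<Rightarrow> 'v set" where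
  "gen2 sc br a b = \<Inter> {S. lie_subalgebra sc br S \<and> a \<in> S \<and> b \<in> S}"

fun lcs :: "('k::field \<Rightarrow> 'v::ab_group_add \<Rightarrow> 'v) \<Rightarrow> ('v \<Rightarrow> 'v \<Rightarrow> 'v) \<Rightarrow> 'v set \<Rightarrow> nat \<Rightarrow> 'v set" where
  "lcs sc br S 0 = S"
| "lcs sc br S (Suc n) = module.span sc {br x y | x y. x \<in> S \<and> y \<in> lcs sc br S n}"

definition nilpotent_sub :: "('k::field \<Rightarrow> 'v::ab_group_add \<Rightarrow> 'v) \<Rightarrow> ('v \<Rightarrow> 'v \<Rightarrow> 'v) \<Rightarrow> 'v set \<Rightarrow> bool" where
  "nilpotent_sub sc br S \<longleftrightarrow> (\<exists>n. lcs sc br S n \<subseteq> {0})"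

definition nilpotent_lie :: "('k::field \<Rightarrow> 'v::ab_group_add \<Rightarrow> 'v) \<Rightarrow> ('v \<Rightarrow> 'v \<Rightarrow> 'v) \<Rightarrow> bool" where
  "nilpotent_lie sc br \<longleftrightarrow> nilpotent_sub sc br UNIV"

definition nil_set :: "('k::field \<Rightarrow> 'v::ab_group_add \<Rightarrow> 'v) \<Rightarrow> ('v \<Rightarrow> 'v \<Rightarrow> 'v) \<Rightarrow> 'v set" where
  "nil_set sc br = {x. \<forall>h. nilpotent_sub sc br (gen2 sc br h x)}"

definition nil_vertices :: "('k::field \<Rightarrow> 'v::ab_group_add \<Rightarrow> 'v) \<Rightarrow> ('v \<Rightarrow> 'v \<Rightarrow> 'v) \<Rightarrow> 'v set" where
  "nil_vertices sc br = UNIV - nil_set sc br"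

definition nil_edges :: "('k::field \<Rightarrow> 'v::ab_group_add \<Rightarrow> 'v) \<Rightarrow> ('v \<Rightarrow> 'v \<Rightarrow> 'v) \<Rightarrow> ('v \<times> 'v) set" where
  "nil_edges sc br = {(x, y). x \<in> nil_vertices sc br \<and> y \<in> nil_vertices sc br \<and> x \<noteq> y
                         \<and> nilpotent_sub sc br (gen2 sc br x y)}"

definition nil_components :: "('k::field \<Rightarrow> 'v::ab_group_add \<Rightarrow> 'v) \<Rightarrow> ('v \<Rightarrow> 'v \<Rightarrow> 'v) \<Rightarrow> 'v set set" where
  "nil_components sc br = (\<lambda>x. (nil_edges sc br)\<^sup>* `` {x}) ` nil_vertices sc br"

definition nil_graph_connected :: "('k::field \<Rightarrow> 'v::ab_group_add \<Rightarrow> 'v) \<Rightarrow> ('v \<Rightarrow> 'v \<Rightarrow> 'v) \<Rightarrow> bool" where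
  "nil_graph_connected sc br \<longleftrightarrow> nil_vertices sc br \<noteq> {}
     \<and> (\<forall>x\<in>nil_vertices sc br. \<forall>y\<in>nil_vertices sc br. (x, y) \<in> (nil_edges sc br)\<^sup>*)"

definition sum_scale :: "('k \<Rightarrow> 'v \<Rightarrow> 'v) \<Rightarrow> ('k \<Rightarrow> 'w \<Rightarrow> 'w) \<Rightarrow> 'k \<Rightarrow> 'v \<times> 'w \<Rightarrow> 'v \<times> 'w" where
  "sum_scale s1 s2 c p = (s1 c (fst p), s2 c (snd p))"

definition sum_bracket :: "('v \<Rightarrow> 'v \<Rightarrow> 'v) \<Rightarrow> ('w \<Rightarrow> 'w \<Rightarrow> 'w) \<Rightarrow> 'v \<times> 'w \<Rightarrow> 'v \<times> 'w \<Rightarrow> 'v \<times> 'w" where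
  "sum_bracket b1 b2 p q = (b1 (fst p) (fst q), b2 (snd p) (snd q))"

end

theory Submission imports Defs begin

(* The subalgebra generated by (x,u) and (y,v) in L1 (+) L projects onto the subalgebra generated
   by x and y, and is contained in <x,y> (+) L, whose lower central series lies in the product of
   those of <x,y> and of the nilpotent L. So <(x,u),(y,v)> is nilpotent iff <x,y> is. Hence
   nil(L1 (+) L) = nil(L1) (+) L, and the nilpotent graph of L1 (+) L is that of L1 with every vertex
   x blown up to the clique {x} (+) L (cliques because <x,x> is abelian). Its components are
   therefore exactly the sets C (+) L for the components C of the nilpotent graph of L1. *)

lemma lie_algebra_module: "lie_algebra s b \<Longrightarrow> module s"
  by (simp add: lie_algebra_def module_iff_vector_space)

lemma lie_bracket_zero:
  assumes "lie_algebra s b"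
  shows "b x 0 = 0" and "b 0 x = 0"
proof -
  have "b x (0 + 0) = b x 0 + b x 0" and "b (0 + 0) x = b 0 x + b 0 x"
    using assms unfolding lie_algebra_def by blast+
  then show "b x 0 = 0" and "b 0 x = 0" by simp_all
qed

lemma lie_bracket_scale:
  assumes "lie_algebra s b"
  shows "b (s c x) y = s c (b x y)" and "b x (s c y) = s c (b x y)"
  using assms unfolding lie_algebra_def by blast+

lemma lie_bracket_self: "lie_algebra s b \<Longrightarrow> b x x = 0"
  unfolding lie_algebra_def by blast

subsection \<open>Generated subalgebras and the lower central series\<close>

lemma gen2_minimal:
  "lie_subalgebra s b T \<Longrightarrow> x \<in> T \<Longrightarrow> y \<in> T \<Longrightarrow> gen2 s b x y \<subseteq> T"
  unfolding gen2_def by auto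

lemma gen2_base: "x \<in> gen2 s b x y" "y \<in> gen2 s b x y"
  unfolding gen2_def by auto

lemma lie_subalgebra_gen2:
  assumes "module s"
  shows "lie_subalgebra s b (gen2 s b x y)"
  unfolding lie_subalgebra_def
proof
  show "module.subspace s (gen2 s b x y)"
    unfolding gen2_def by (rule module.subspace_Inter[OF assms]) (auto simp: lie_subalgebra_def)
  show "\<forall>p\<in>gen2 s b x y. \<forall>q\<in>gen2 s b x y. b p q \<in> gen2 s b x y"
    unfolding gen2_def lie_subalgebra_def by auto
qed

lemma lcs_mono:
  assumes "module s" and "S \<subseteq> T"
  shows "lcs s b S n \<subseteq> lcs s b T n"
proof (induction n)
  case 0
  then show ?case using assms(2) by simp
next
  case (Suc n)
  then show ?case
    unfolding lcs.simps by (intro module.span_mono[OF assms(1)]) (use assms(2) in blast)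
qed

lemma nilpotent_sub_subset:
  "module s \<Longrightarrow> S \<subseteq> T \<Longrightarrow> nilpotent_sub s b T \<Longrightarrow> nilpotent_sub s b S"
  unfolding nilpotent_sub_def using lcs_mono by blast

lemma lcs_subset_zero_mono:
  assumes "lie_algebra s b" and "lcs s b S n \<subseteq> {0}" and "n \<le> m"
  shows "lcs s b S m \<subseteq> {0}"
  using assms(3)
proof (induction m rule: dec_induct)
  case base
  then show ?case using assms(2) .
next
  case (step m)
  then have "{b x y | x y. x \<in> S \<and> y \<in> lcs s b S m} \<subseteq> {0}"
    using lie_bracket_zero[OF assms(1)] by auto
  then show ?case
    unfolding lcs.simps
    using module.span_minimal[OF lie_algebra_module[OF assms(1)]]
      module.subspace_single_0[OF lie_algebra_module[OF assms(1)]]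
    by blast
qed

lemma nilpotent_sub_abelian:
  assumes "module s" and "\<And>p q. p \<in> S \<Longrightarrow> q \<in> S \<Longrightarrow> b p q = 0"
  shows "nilpotent_sub s b S"
proof -
  have "{b p q | p q. p \<in> S \<and> q \<in> lcs s b S 0} \<subseteq> {0}"
    using assms(2) by auto
  then have "lcs s b S 1 \<subseteq> {0}"
    using module.span_minimal[OF assms(1)] module.subspace_single_0[OF assms(1)] by simp
  then show ?thesis
    unfolding nilpotent_sub_def by blast
qed

lemma nilpotent_sub_gen2_self:
  assumes "lie_algebra s b"
  shows "nilpotent_sub s b (gen2 s b x x)"
proof -
  have m: "module s" using lie_algebra_module[OF assms] .
  let ?T = "module.span s {x}"
  have abelian: "b p q = 0" if p: "p \<in> ?T" and q: "q \<in> ?T" for p q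
  proof -
    obtain c d where "p = s c x" and "q = s d x"
      using p q module.span_singleton[OF m] by (metis rangeE)
    then have "b p q = s d (s c (b x x))"
      by (simp only: lie_bracket_scale[OF assms])
    also have "\<dots> = 0"
      by (simp add: lie_bracket_self[OF assms] module.scale_zero_right[OF m])
    finally show ?thesis .
  qed
  have "lie_subalgebra s b ?T"
    unfolding lie_subalgebra_def using abelian module.subspace_span[OF m] module.span_zero[OF m]
    by auto
  moreover have "x \<in> ?T"
    by (rule module.span_base[OF m]) simp
  ultimately have "gen2 s b x x \<subseteq> ?T"
    using gen2_minimal by blast
  then show ?thesis
    by (rule nilpotent_sub_subset[OF m _ nilpotent_sub_abelian[OF m abelian]])
qed

subsection \<open>Direct sums\<close>

lemma module_sum_scale: "module s1 \<Longrightarrow> module s2 \<Longrightarrow> module (sum_scale s1 s2)"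
  unfolding module_def sum_scale_def by (auto simp: prod_eq_iff)

lemma subspace_sum_scale_Times:
  assumes "module s1" and "module s2" and "module.subspace s1 X" and "module.subspace s2 Y"
  shows "module.subspace (sum_scale s1 s2) (X \<times> Y)"
  using assms
  unfolding module.subspace_def[OF assms(1)] module.subspace_def[OF assms(2)]
    module.subspace_def[OF module_sum_scale[OF assms(1,2)]]
  by (auto simp: sum_scale_def zero_prod_def)

lemma module_hom_fst: "module s1 \<Longrightarrow> module s2 \<Longrightarrow> module_hom (sum_scale s1 s2) s1 fst"
  using module_sum_scale unfolding module_hom_def module_hom_axioms_def
  by (auto simp: sum_scale_def)

lemma lie_subalgebra_image_fst:
  assumes "module s1" and "module s2" and "lie_subalgebra (sum_scale s1 s2) (sum_bracket b1 b2) G"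
  shows "lie_subalgebra s1 b1 (fst ` G)"
  unfolding lie_subalgebra_def
proof
  show "module.subspace s1 (fst ` G)"
    using assms(3) module_hom.subspace_image[OF module_hom_fst[OF assms(1,2)]]
    unfolding lie_subalgebra_def by blast
  show "\<forall>x\<in>fst ` G. \<forall>y\<in>fst ` G. b1 x y \<in> fst ` G"
  proof (intro ballI)
    fix x y assume "x \<in> fst ` G" and "y \<in> fst ` G"
    then obtain p q where "p \<in> G" "q \<in> G" "x = fst p" "y = fst q" by blast
    moreover from this have "sum_bracket b1 b2 p q \<in> G"
      using assms(3) unfolding lie_subalgebra_def by blast
    ultimately show "b1 x y \<in> fst ` G" by (force simp: sum_bracket_def)
  qed
qed

lemma lie_subalgebra_Times_UNIV:
  assumes "module s1" and "module s2" and "lie_subalgebra s1 b1 A"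
  shows "lie_subalgebra (sum_scale s1 s2) (sum_bracket b1 b2) (A \<times> UNIV)"
  using assms subspace_sum_scale_Times[OF assms(1,2) _ module.subspace_UNIV[OF assms(2)]]
  unfolding lie_subalgebra_def by (auto simp: sum_bracket_def)

lemma lcs_sum_Times_UNIV_subset:
  assumes "module s1" and "module s2"
  shows "lcs (sum_scale s1 s2) (sum_bracket b1 b2) (A \<times> UNIV) n
         \<subseteq> lcs s1 b1 A n \<times> lcs s2 b2 UNIV n"
proof (induction n)
  case 0
  then show ?case by simp
next
  case (Suc n)
  have "sum_bracket b1 b2 p q \<in> lcs s1 b1 A (Suc n) \<times> lcs s2 b2 UNIV (Suc n)"
    if p: "p \<in> A \<times> UNIV" and q: "q \<in> lcs (sum_scale s1 s2) (sum_bracket b1 b2) (A \<times> UNIV) n"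
    for p q
  proof -
    have "fst q \<in> lcs s1 b1 A n" and "snd q \<in> lcs s2 b2 UNIV n"
      using Suc q by auto
    then show ?thesis
      using p unfolding sum_bracket_def lcs.simps
      by (force intro!: module.span_base[OF assms(1)] module.span_base[OF assms(2)])
  qed
  then have "{sum_bracket b1 b2 p q |p q. p \<in> A \<times> UNIV
           \<and> q \<in> lcs (sum_scale s1 s2) (sum_bracket b1 b2) (A \<times> UNIV) n}
        \<subseteq> lcs s1 b1 A (Suc n) \<times> lcs s2 b2 UNIV (Suc n)"
    by blast
  moreover have "module.subspace (sum_scale s1 s2) (lcs s1 b1 A (Suc n) \<times> lcs s2 b2 UNIV (Suc n))"
    unfolding lcs.simps
    by (rule subspace_sum_scale_Times[OF assms module.subspace_span[OF assms(1)]
          module.subspace_span[OF assms(2)]])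
  ultimately show ?case
    by (subst lcs.simps) (rule module.span_minimal[OF module_sum_scale[OF assms]])
qed

lemma lcs_image_fst_subset:
  assumes "module s1" and "module s2"
  shows "lcs s1 b1 (fst ` G) n \<subseteq> fst ` lcs (sum_scale s1 s2) (sum_bracket b1 b2) G n"
proof (induction n)
  case 0
  then show ?case by simp
next
  case (Suc n)
  let ?C = "lcs (sum_scale s1 s2) (sum_bracket b1 b2) G n"
  have "{b1 x y |x y. x \<in> fst ` G \<and> y \<in> lcs s1 b1 (fst ` G) n}
        \<subseteq> fst ` {sum_bracket b1 b2 p q |p q. p \<in> G \<and> q \<in> ?C}"
  proof
    fix z assume "z \<in> {b1 x y |x y. x \<in> fst ` G \<and> y \<in> lcs s1 b1 (fst ` G) n}"
    then obtain p q where "p \<in> G" "q \<in> ?C" "z = b1 (fst p) (fst q)"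
      using Suc by blast
    moreover from this have "z = fst (sum_bracket b1 b2 p q)"
      by (simp add: sum_bracket_def)
    ultimately show "z \<in> fst ` {sum_bracket b1 b2 p q |p q. p \<in> G \<and> q \<in> ?C}"
      by blast
  qed
  then have "lcs s1 b1 (fst ` G) (Suc n)
             \<subseteq> module.span s1 (fst ` {sum_bracket b1 b2 p q |p q. p \<in> G \<and> q \<in> ?C})"
    unfolding lcs.simps by (rule module.span_mono[OF assms(1)])
  also have "\<dots> = fst ` lcs (sum_scale s1 s2) (sum_bracket b1 b2) G (Suc n)"
    unfolding lcs.simps by (rule module_hom.span_image[OF module_hom_fst[OF assms]])
  finally show ?case .
qed

lemma nilpotent_sub_image_fst:
  assumes "module s1" and "module s2" and "nilpotent_sub (sum_scale s1 s2) (sum_bracket b1 b2) G"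
  shows "nilpotent_sub s1 b1 (fst ` G)"
proof -
  obtain n where "lcs (sum_scale s1 s2) (sum_bracket b1 b2) G n \<subseteq> {0}"
    using assms(3) unfolding nilpotent_sub_def by blast
  then have "lcs s1 b1 (fst ` G) n \<subseteq> {0}"
    using lcs_image_fst_subset[OF assms(1,2), of b1 G n b2] by force
  then show ?thesis
    unfolding nilpotent_sub_def by blast
qed

lemma nilpotent_sub_Times_UNIV:
  assumes "lie_algebra s1 b1" and "lie_algebra s2 b2" and "nilpotent_lie s2 b2"
    and "nilpotent_sub s1 b1 A"
  shows "nilpotent_sub (sum_scale s1 s2) (sum_bracket b1 b2) (A \<times> UNIV)"
proof -
  obtain k1 where "lcs s1 b1 A k1 \<subseteq> {0}"
    using assms(4) unfolding nilpotent_sub_def by blast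
  then have "lcs s1 b1 A (max k1 k2) \<subseteq> {0}" for k2
    using lcs_subset_zero_mono[OF assms(1)] by simp
  moreover obtain k2 where "lcs s2 b2 UNIV k2 \<subseteq> {0}"
    using assms(3) unfolding nilpotent_lie_def nilpotent_sub_def by blast
  then have "lcs s2 b2 UNIV (max k1 k2) \<subseteq> {0}"
    using lcs_subset_zero_mono[OF assms(2)] by simp
  ultimately have "lcs (sum_scale s1 s2) (sum_bracket b1 b2) (A \<times> UNIV) (max k1 k2) \<subseteq> {0}"
    using lcs_sum_Times_UNIV_subset[of s1 s2 b1 b2 A "max k1 k2"]
      lie_algebra_module[OF assms(1)] lie_algebra_module[OF assms(2)]
    by (auto simp: zero_prod_def)
  then show ?thesis
    unfolding nilpotent_sub_def by blast
qed

lemma nilpotent_sub_gen2_sum_iff: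
  assumes "lie_algebra s1 b1" and "lie_algebra s2 b2" and "nilpotent_lie s2 b2"
  shows "nilpotent_sub (sum_scale s1 s2) (sum_bracket b1 b2)
           (gen2 (sum_scale s1 s2) (sum_bracket b1 b2) (x, u) (y, v))
         \<longleftrightarrow> nilpotent_sub s1 b1 (gen2 s1 b1 x y)"
proof -
  have m1: "module s1" and m2: "module s2"
    using assms(1,2) by (auto intro: lie_algebra_module)
  let ?G = "gen2 (sum_scale s1 s2) (sum_bracket b1 b2) (x, u) (y, v)"
  let ?A = "gen2 s1 b1 x y"
  have G: "lie_subalgebra (sum_scale s1 s2) (sum_bracket b1 b2) ?G"
    by (rule lie_subalgebra_gen2[OF module_sum_scale[OF m1 m2]])
  have "(x, u) \<in> ?G" and "(y, v) \<in> ?G"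
    by (rule gen2_base)+
  then have "x \<in> fst ` ?G" and "y \<in> fst ` ?G"
    by (metis fst_conv image_eqI)+
  then have A_sub: "?A \<subseteq> fst ` ?G"
    by (rule gen2_minimal[OF lie_subalgebra_image_fst[OF m1 m2 G]])
  have "x \<in> ?A" and "y \<in> ?A"
    by (rule gen2_base)+
  then have G_sub: "?G \<subseteq> ?A \<times> UNIV"
    by (intro gen2_minimal[OF lie_subalgebra_Times_UNIV[OF m1 m2 lie_subalgebra_gen2[OF m1]]]) simp_all
  show ?thesis
  proof
    assume "nilpotent_sub (sum_scale s1 s2) (sum_bracket b1 b2) ?G"
    then show "nilpotent_sub s1 b1 ?A"
      by (rule nilpotent_sub_subset[OF m1 A_sub nilpotent_sub_image_fst[OF m1 m2]])
  next
    assume "nilpotent_sub s1 b1 ?A"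
    then show "nilpotent_sub (sum_scale s1 s2) (sum_bracket b1 b2) ?G"
      by (rule nilpotent_sub_subset[OF module_sum_scale[OF m1 m2] G_sub
            nilpotent_sub_Times_UNIV[OF assms]])
  qed
qed

subsection \<open>The nilpotent graph of a direct sum with a nilpotent algebra\<close>

context
  fixes s1 :: "'k::field \<Rightarrow> 'v::ab_group_add \<Rightarrow> 'v" and b1 :: "'v \<Rightarrow> 'v \<Rightarrow> 'v"
    and s2 :: "'k \<Rightarrow> 'w::ab_group_add \<Rightarrow> 'w" and b2 :: "'w \<Rightarrow> 'w \<Rightarrow> 'w"
  assumes lie1: "lie_algebra s1 b1" and lie2: "lie_algebra s2 b2" and nil2: "nilpotent_lie s2 b2"
begin

lemma nil_set_sum_iff:
  "p \<in> nil_set (sum_scale s1 s2) (sum_bracket b1 b2) \<longleftrightarrow> fst p \<in> nil_set s1 b1"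
  using nilpotent_sub_gen2_sum_iff[OF lie1 lie2 nil2]
  unfolding nil_set_def by (cases p) (simp add: split_paired_All)

lemma nil_vertices_sum:
  "nil_vertices (sum_scale s1 s2) (sum_bracket b1 b2) = nil_vertices s1 b1 \<times> UNIV"
  unfolding nil_vertices_def using nil_set_sum_iff by auto

lemma nil_edges_sum_iff:
  "(p, q) \<in> nil_edges (sum_scale s1 s2) (sum_bracket b1 b2)
   \<longleftrightarrow> fst p \<in> nil_vertices s1 b1 \<and> fst q \<in> nil_vertices s1 b1 \<and> p \<noteq> q
       \<and> nilpotent_sub s1 b1 (gen2 s1 b1 (fst p) (fst q))"
  using nilpotent_sub_gen2_sum_iff[OF lie1 lie2 nil2, of "fst p" "snd p" "fst q" "snd q"]
  unfolding nil_edges_def nil_vertices_sum by (simp add: mem_Times_iff)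

lemma rtrancl_nil_edges_sum_fst:
  "(p, q) \<in> (nil_edges (sum_scale s1 s2) (sum_bracket b1 b2))\<^sup>*
   \<Longrightarrow> (fst p, fst q) \<in> (nil_edges s1 b1)\<^sup>*"
proof (induction rule: rtrancl_induct)
  case (step q r)
  show ?case
  proof (cases "fst q = fst r")
    case False
    with step(2) have "(fst q, fst r) \<in> nil_edges s1 b1"
      unfolding nil_edges_sum_iff nil_edges_def[of s1 b1] by simp
    with step(3) show ?thesis by simp
  qed (use step in simp)
qed simp

lemma rtrancl_nil_edges_sum_Pair:
  "(x, y) \<in> (nil_edges s1 b1)\<^sup>*
   \<Longrightarrow> ((x, u), (y, u)) \<in> (nil_edges (sum_scale s1 s2) (sum_bracket b1 b2))\<^sup>*"
proof (induction rule: rtrancl_induct)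
  case (step y z)
  from step(2) have "((y, u), (z, u)) \<in> nil_edges (sum_scale s1 s2) (sum_bracket b1 b2)"
    unfolding nil_edges_sum_iff nil_edges_def[of s1 b1] by simp
  with step(3) show ?case by simp
qed simp

lemma nil_edges_sum_fiber:
  assumes "x \<in> nil_vertices s1 b1"
  shows "((x, u), (x, v)) \<in> (nil_edges (sum_scale s1 s2) (sum_bracket b1 b2))\<^sup>*"
proof (cases "u = v")
  case False
  with assms have "((x, u), (x, v)) \<in> nil_edges (sum_scale s1 s2) (sum_bracket b1 b2)"
    unfolding nil_edges_sum_iff using nilpotent_sub_gen2_self[OF lie1] by auto
  then show ?thesis by blast
qed simp

lemma rtrancl_nil_edges_sum_iff:
  assumes "p \<in> nil_vertices (sum_scale s1 s2) (sum_bracket b1 b2)"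
  shows "(p, q) \<in> (nil_edges (sum_scale s1 s2) (sum_bracket b1 b2))\<^sup>*
         \<longleftrightarrow> (fst p, fst q) \<in> (nil_edges s1 b1)\<^sup>*"
proof
  assume path: "(fst p, fst q) \<in> (nil_edges s1 b1)\<^sup>*"
  then have "((fst p, snd p), (fst q, snd p))
             \<in> (nil_edges (sum_scale s1 s2) (sum_bracket b1 b2))\<^sup>*"
    by (rule rtrancl_nil_edges_sum_Pair)
  moreover have "fst q \<in> nil_vertices s1 b1"
    using path assms unfolding nil_vertices_sum
    by (induction rule: rtrancl_induct) (auto simp: nil_edges_def)
  then have "((fst q, snd p), (fst q, snd q))
             \<in> (nil_edges (sum_scale s1 s2) (sum_bracket b1 b2))\<^sup>*"
    by (rule nil_edges_sum_fiber)
  ultimately show "(p, q) \<in> (nil_edges (sum_scale s1 s2) (sum_bracket b1 b2))\<^sup>*"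
    by simp
qed (rule rtrancl_nil_edges_sum_fst)

lemma nil_components_sum:
  "nil_components (sum_scale s1 s2) (sum_bracket b1 b2) = (\<lambda>C. C \<times> UNIV) ` nil_components s1 b1"
proof -
  have component: "(nil_edges (sum_scale s1 s2) (sum_bracket b1 b2))\<^sup>* `` {p}
                   = (nil_edges s1 b1)\<^sup>* `` {fst p} \<times> UNIV"
    if "p \<in> nil_vertices (sum_scale s1 s2) (sum_bracket b1 b2)" for p
    using rtrancl_nil_edges_sum_iff[OF that] by auto
  have "nil_components (sum_scale s1 s2) (sum_bracket b1 b2)
        = (\<lambda>p. (nil_edges s1 b1)\<^sup>* `` {fst p} \<times> UNIV) ` (nil_vertices s1 b1 \<times> (UNIV :: 'w set))"
    unfolding nil_components_def
    by (rule image_cong[OF nil_vertices_sum component]) (simp add: nil_vertices_sum)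
  also have "\<dots> = (\<lambda>C. C \<times> UNIV) ` nil_components s1 b1"
    unfolding nil_components_def image_image by (force simp: image_iff)
  finally show ?thesis .
qed

lemma bij_betw_nil_components_sum:
  "bij_betw (\<lambda>C. C \<times> UNIV) (nil_components s1 b1) (nil_components (sum_scale s1 s2) (sum_bracket b1 b2))"
  unfolding nil_components_sum by (rule inj_on_imp_bij_betw) (auto simp: inj_on_def times_eq_iff)

lemma nil_graph_connected_sum_iff:
  "nil_graph_connected (sum_scale s1 s2) (sum_bracket b1 b2) \<longleftrightarrow> nil_graph_connected s1 b1"
  unfolding nil_graph_connected_def
  using rtrancl_nil_edges_sum_iff unfolding nil_vertices_sum by auto

end

theorem theorem5p4:
  fixes s1 :: "'k::field \<Rightarrow> 'v::ab_group_add \<Rightarrow> 'v" and b1 :: "'v \<Rightarrow> 'v \<Rightarrow> 'v"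
    and s2 :: "'k \<Rightarrow> 'w::ab_group_add \<Rightarrow> 'w" and b2 :: "'w \<Rightarrow> 'w \<Rightarrow> 'w"
  assumes "fin_dim_lie_algebra s1 b1" and "\<not> nilpotent_lie s1 b1"
    and "fin_dim_lie_algebra s2 b2" and "nilpotent_lie s2 b2"
  shows "(\<exists>f. bij_betw f (nil_components (sum_scale s1 s2) (sum_bracket b1 b2))
                         (nil_components s1 b1))
    \<and> (nil_graph_connected s1 b1
         \<longleftrightarrow> nil_graph_connected (sum_scale s1 s2) (sum_bracket b1 b2))"
proof -
  have lie1: "lie_algebra s1 b1" and lie2: "lie_algebra s2 b2"
    using assms(1,3) by (auto simp: fin_dim_lie_algebra_def)
  show ?thesis
    using bij_betw_inv_into[OF bij_betw_nil_components_sum[OF lie1 lie2 assms(4)]]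
      nil_graph_connected_sum_iff[OF lie1 lie2 assms(4)]
    by blast
qed

end
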